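(* Let $p_{1}, p_{2}, r \in \mathbb N$ and $T(p_{1},p_{2},r):=\sum_{n=1}^\infty \frac{(-1)^{n+1}H_n^{(p_{1})}H_n^{(p_{2})}}{n+r}$. Then \begin{align*} T(p_{1},p_{2},r) &=(-1)^{r}\left(S_{p_{1},p_{2},1}^{+,+,-}-S_{p_{1},p_{2}+1}^{+,-}-S_{p_{2},p_{1}+1}^{+,-}+\overline{\zeta}(p_{1}+p_{2}+1)\right)\\ &\quad +\sum_{j=1}^{r-1}(-1)^{r-1-j}\big(S(p_{1},p_{2},1,j,1)+S(p_{2},p_{1},1,j,1)\big) +\sum_{j=1}^{r-1}(-1)^{r-j}S(0,p_{1}+p_{2}+1,1,j,1)\,. \end{align*}
   Context: $H_n^{(q)}=\sum_{j=1}^n j^{-q}$ for $q\in\mathbb N$, and $H_n^{(0)}:=n$. For $q\in\{0\}\cup\mathbb N$ and $m,t,j\in\mathbb N$, $S(q,m,t,j,1):=\sum_{n=1}^\infty\frac{(-1)^{n+1}H_n^{(q)}}{n^{m}(n+j)^{t}}$. $S_{p,q}^{+,-}:=\sum_{n\ge1}(-1)^{n-1}H_n^{(p)}/n^q$, $S_{p_1,p_2,q}^{+,+,-}:=\sum_{n\ge1}(-1)^{n-1}H_n^{(p_1)}H_n^{(p_2)}/n^q$, and $\overline{\zeta}(s)=\sum_{n\ge1}(-1)^{n-1}n^{-s}$. Empty sums are $0$. *)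

theory Defs
  imports Complex_Main
begin

definition H :: "nat \<Rightarrow> nat \<Rightarrow> real" where
  "H q n = (if q = 0 then real n else (\<Sum>j=1..n. 1 / real j ^ q))"

text \<open>S(q,m,t,j,1) = sum_{n>=1} (-1)^(n+1) H_n^(q) / (n^m (n+j)^t)\<close>
definition S :: "nat \<Rightarrow> nat \<Rightarrow> nat \<Rightarrow> nat \<Rightarrow> real" where
  "S q m t j = (\<Sum>k. (let n = Suc k in
      (-1) ^ (n + 1) * H q n / (real n ^ m * real (n + j) ^ t)))"

definition Spm :: "nat \<Rightarrow> nat \<Rightarrow> real" where
  "Spm p q = (\<Sum>k. (let n = Suc k in (-1) ^ (n - 1) * H p n / real n ^ q))"

definition Sppm :: "nat \<Rightarrow> nat \<Rightarrow> nat \<Rightarrow> real" where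
  "Sppm p1 p2 q = (\<Sum>k. (let n = Suc k in (-1) ^ (n - 1) * H p1 n * H p2 n / real n ^ q))"

definition zetabar :: "nat \<Rightarrow> real" where
  "zetabar s = (\<Sum>k. (let n = Suc k in (-1) ^ (n - 1) / real n ^ s))"

definition T :: "nat \<Rightarrow> nat \<Rightarrow> nat \<Rightarrow> real" where
  "T p1 p2 r = (\<Sum>k. (let n = Suc k in (-1) ^ (n + 1) * H p1 n * H p2 n / real (n + r)))"

end

(*
  Shifting the summation index in T(p1,p2,j+1) and expanding the product with
  H_{n+1}^(p) = H_n^(p) + 1/(n+1)^p gives the recurrence
    T(p1,p2,j+1) = S(p1,p2,1,j,1) + S(p2,p1,1,j,1) - S(0,p1+p2+1,1,j,1) - T(p1,p2,j),
  and unrolling it down to T(p1,p2,0) = S^{+,+,-}_{p1,p2,1} yields the formula, the j = 0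
  values of S being S^{+,-}_{p,q+1} and zetabar(p1+p2+1).  The analytic input is convergence:
  H_n^(p) <= 1 + ln n makes every S-series absolutely convergent, and T(p1,p2,0) converges
  because its terms tend to 0 with absolutely summable differences.
*)
theory Submission
  imports Defs "HOL-Analysis.Harmonic_Numbers" "HOL-Real_Asymp.Real_Asymp"
begin

lemma H_0 [simp]: "H p 0 = 0"
  by (simp add: H_def)

lemma H_Suc: "1 \<le> p \<Longrightarrow> H p (Suc n) = H p n + 1 / real (Suc n) ^ p"
  by (simp add: H_def)

lemma H_nonneg: "0 \<le> H p n"
  by (auto simp: H_def intro!: sum_nonneg)

lemma H_le_harm:
  assumes "1 \<le> p"
  shows "H p n \<le> harm n"
  unfolding H_def harm_def using assms
  by (auto simp: divide_inverse intro!: sum_mono le_imp_inverse_le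
      intro: order_trans[OF _ power_increasing[of 1 p]])

lemma harm_le_one_plus_ln:
  assumes "1 \<le> n"
  shows "harm n \<le> 1 + ln (real n)"
proof -
  obtain m where n: "n = Suc m"
    using assms by (cases n) auto
  have "harm (Suc m) - ln (real (Suc m)) \<le> harm (Suc 0) - ln (real (Suc 0))"
    using decseq_harm_diff_ln unfolding decseq_def by blast
  moreover have "harm (Suc 0) = (1 :: real)"
    by (simp add: harm_def)
  ultimately show ?thesis
    unfolding n by simp
qed

lemma H_le_one_plus_ln: "1 \<le> p \<Longrightarrow> 1 \<le> n \<Longrightarrow> H p n \<le> 1 + ln (real n)"
  using H_le_harm harm_le_one_plus_ln order_trans by blast

lemma summable_by_ln_square_bound:
  fixes f :: "nat \<Rightarrow> real"
  assumes "\<And>k. \<bar>f k\<bar> \<le> (2 + ln (real (Suc k))) ^ 2 / real (Suc k) ^ 2"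
  shows "summable f"
proof (rule summable_comparison_test'[where N = 0])
  show "summable (\<lambda>k. (2 + ln (real (Suc k))) ^ 2 / real (Suc k) ^ 2)"
  proof (rule summable_comparison_test_bigo)
    show "summable (\<lambda>k. norm (real k powr (-3/2)))"
      by (simp add: summable_real_powr_iff)
    show "(\<lambda>k. (2 + ln (real (Suc k))) ^ 2 / real (Suc k) ^ 2) \<in> O(\<lambda>k. real k powr (-3/2))"
      by real_asymp
  qed
qed (use assms in simp)

lemma summable_alternating_bounded_variation:
  fixes b :: "nat \<Rightarrow> real"
  assumes "b \<longlonglongrightarrow> 0" and "summable (\<lambda>n. \<bar>b n - b (Suc n)\<bar>)"
  shows "summable (\<lambda>n. (-1) ^ n * b n)"
proof -
  define e where "e n = (-1) ^ n * b n" for n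
  have "summable (\<lambda>n. (-1) ^ n * (b n - b (Suc n)))"
    using assms(2) by (rule summable_comparison_test'[where N = 0]) (simp add: abs_mult)
  moreover have "(\<lambda>n. \<bar>e n\<bar>) \<longlonglongrightarrow> 0"
    using tendsto_rabs_zero[OF assms(1)] by (simp add: e_def abs_mult)
  then have "summable (\<lambda>n. e n - e (Suc n))"
    by (rule telescope_summable'[OF tendsto_rabs_zero_cancel])
  ultimately have "summable (\<lambda>n. ((-1) ^ n * (b n - b (Suc n)) + (e n - e (Suc n))) / 2)"
    by (intro summable_divide summable_add)
  then show ?thesis
    by (simp add: e_def algebra_simps)
qed

lemma abs_product_quotient_increment_le:
  fixes x y a b n :: real
  assumes n: "1 \<le> n" and xy: "0 \<le> x" "0 \<le> y" and ab: "0 \<le> a" "0 \<le> b"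
    and small: "(n + 1) * a \<le> 1" "(n + 1) * b \<le> 1"
  shows "\<bar>x * y / n - (x + a) * (y + b) / (n + 1)\<bar> \<le> (x + 1) * (y + 1) / n ^ 2"
proof -
  define num where "num = x * y - n * (x * b + y * a + a * b)"
  have eq: "x * y / n - (x + a) * (y + b) / (n + 1) = num / (n * (n + 1))"
    using n unfolding num_def by (simp add: field_simps)
  have na: "n * a \<le> 1" and nb: "n * b \<le> 1"
    using small ab by (simp_all add: algebra_simps)
  then have "b \<le> 1"
    using mult_right_mono[OF n ab(2)] by simp
  have "n * (x * b) \<le> x" "n * (y * a) \<le> y"
    using mult_left_mono[OF nb xy(1)] mult_left_mono[OF na xy(2)] by (simp_all add: ac_simps)
  moreover have "n * (a * b) \<le> 1"
    using mult_mono[OF na \<open>b \<le> 1\<close>] ab by (simp add: ac_simps)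
  moreover have "0 \<le> n * (x * b + y * a + a * b)"
    using n xy ab by simp
  ultimately have "\<bar>num\<bar> \<le> (x + 1) * (y + 1)"
    unfolding num_def using mult_nonneg_nonneg[OF xy] by (simp add: abs_le_iff algebra_simps)
  moreover have "n ^ 2 \<le> n * (n + 1)"
    using n by (simp add: power2_eq_square algebra_simps)
  ultimately show ?thesis
    unfolding eq abs_divide using n xy
    by (intro frac_le) (simp_all add: abs_mult)
qed

definition T_term :: "nat \<Rightarrow> nat \<Rightarrow> nat \<Rightarrow> nat \<Rightarrow> real" where
  "T_term p1 p2 r n = (-1) ^ (n + 1) * H p1 n * H p2 n / real (n + r)"

definition S_term :: "nat \<Rightarrow> nat \<Rightarrow> nat \<Rightarrow> nat \<Rightarrow> nat \<Rightarrow> real" where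
  "S_term q m t j n = (-1) ^ (n + 1) * H q n / (real n ^ m * real (n + j) ^ t)"

lemma T_eq_suminf: "T p1 p2 r = (\<Sum>k. T_term p1 p2 r (Suc k))"
  unfolding T_def T_term_def Let_def ..

lemma S_eq_suminf: "S q m t j = (\<Sum>k. S_term q m t j (Suc k))"
  unfolding S_def S_term_def Let_def ..

lemma T_0_eq_Sppm: "T p1 p2 0 = Sppm p1 p2 1"
  unfolding Sppm_def T_def by simp

lemma S_0_eq_Spm: "S p q 1 0 = Spm p (q + 1)"
  unfolding Spm_def S_def by (simp add: field_simps)

lemma S_0_eq_zetabar: "S 0 (q + 1) 1 0 = zetabar (q + 1)"
  unfolding zetabar_def S_def by (simp add: H_def field_simps)

lemma abs_S_term_le:
  assumes "1 \<le> t" "1 \<le> n"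
  shows "\<bar>S_term q m t j n\<bar> \<le> H q n / real n ^ Suc m"
proof -
  have "real n \<le> real (n + j) ^ t"
    using power_increasing[OF assms(1), of "real (n + j)"] assms(2) by simp
  from mult_right_mono[OF this, of "real n ^ m"]
  have "real n ^ Suc m \<le> real n ^ m * real (n + j) ^ t"
    by (simp add: ac_simps)
  then show ?thesis
    unfolding S_term_def using assms(2) H_nonneg[of q n]
    by (simp add: abs_mult abs_divide divide_left_mono)
qed

lemma summable_S_term:
  assumes "1 \<le> q" "1 \<le> m" "1 \<le> t"
  shows "summable (\<lambda>k. S_term q m t j (Suc k))"
proof (rule summable_by_ln_square_bound)
  fix k
  define n where "n = Suc k"
  have "\<bar>S_term q m t j n\<bar> \<le> H q n / real n ^ Suc m"
    by (rule abs_S_term_le[OF assms(3)]) (simp add: n_def)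
  also have "\<dots> \<le> (2 + ln (real n)) ^ 2 / real n ^ 2"
  proof (rule frac_le)
    have "2 + ln (real n) \<le> (2 + ln (real n)) ^ 2"
      by (rule self_le_power) (simp_all add: n_def)
    then show "H q n \<le> (2 + ln (real n)) ^ 2"
      using H_le_one_plus_ln[OF assms(1), of n] by (simp add: n_def)
    show "real n ^ 2 \<le> real n ^ Suc m"
      using assms(2) by (intro power_increasing) (simp_all add: n_def)
  qed (simp_all add: n_def)
  finally show "\<bar>S_term q m t j (Suc k)\<bar> \<le> (2 + ln (real (Suc k))) ^ 2 / real (Suc k) ^ 2"
    by (simp add: n_def)
qed

lemma summable_S_term_0:
  assumes "2 \<le> m" "1 \<le> t"
  shows "summable (\<lambda>k. S_term 0 m t j (Suc k))"
proof (rule summable_by_ln_square_bound)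
  fix k
  define n where "n = Suc k"
  have "\<bar>S_term 0 m t j n\<bar> \<le> H 0 n / real n ^ Suc m"
    by (rule abs_S_term_le[OF assms(2)]) (simp add: n_def)
  also have "\<dots> = 1 / real n ^ m"
    by (simp add: H_def n_def)
  also have "\<dots> \<le> (2 + ln (real n)) ^ 2 / real n ^ 2"
  proof (rule frac_le)
    show "1 \<le> (2 + ln (real n)) ^ 2"
      by (simp add: n_def one_le_power)
    show "real n ^ 2 \<le> real n ^ m"
      using assms(1) by (intro power_increasing) (simp_all add: n_def)
  qed (simp_all add: n_def)
  finally show "\<bar>S_term 0 m t j (Suc k)\<bar> \<le> (2 + ln (real (Suc k))) ^ 2 / real (Suc k) ^ 2"
    by (simp add: n_def)
qed

lemma summable_T_term_0:
  assumes "1 \<le> p1" "1 \<le> p2"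
  shows "summable (\<lambda>k. T_term p1 p2 0 (Suc k))"
proof -
  define b where "b k = H p1 (Suc k) * H p2 (Suc k) / real (Suc k)" for k
  have H_le: "H p (Suc k) \<le> 1 + ln (real (Suc k))" if "1 \<le> p" for p k
    by (rule H_le_one_plus_ln[OF that]) simp
  have "b \<longlonglongrightarrow> 0"
  proof (rule tendsto_sandwich)
    show "\<forall>\<^sub>F k in sequentially. 0 \<le> b k"
      by (simp add: b_def H_nonneg)
    show "\<forall>\<^sub>F k in sequentially. b k \<le> (1 + ln (real (Suc k))) ^ 2 / real (Suc k)"
      unfolding b_def power2_eq_square
      by (intro always_eventually allI divide_right_mono mult_mono H_le assms H_nonneg) simp_all
    show "(\<lambda>k. (1 + ln (real (Suc k))) ^ 2 / real (Suc k)) \<longlonglongrightarrow> 0"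
      by real_asymp
  qed simp
  moreover have "summable (\<lambda>k. \<bar>b k - b (Suc k)\<bar>)"
  proof (rule summable_by_ln_square_bound)
    fix k
    define n where "n = real (Suc k)"
    have small: "(n + 1) * (1 / real (Suc (Suc k)) ^ p) \<le> 1" if "1 \<le> p" for p
      using self_le_power[of "real (Suc (Suc k))" p] that by (simp add: n_def field_simps)
    have bk: "b k = H p1 (Suc k) * H p2 (Suc k) / n"
      by (simp add: b_def n_def)
    have bSk: "b (Suc k) = (H p1 (Suc k) + 1 / real (Suc (Suc k)) ^ p1)
        * (H p2 (Suc k) + 1 / real (Suc (Suc k)) ^ p2) / (n + 1)"
      unfolding b_def H_Suc[OF assms(1), of "Suc k"] H_Suc[OF assms(2), of "Suc k"] n_def
      by simp
    have "\<bar>b k - b (Suc k)\<bar> \<le> (H p1 (Suc k) + 1) * (H p2 (Suc k) + 1) / n ^ 2"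
      unfolding bk bSk
      by (rule abs_product_quotient_increment_le[OF _ H_nonneg H_nonneg _ _
            small[OF assms(1)] small[OF assms(2)]]) (simp_all add: n_def)
    also have "\<dots> \<le> (2 + ln n) ^ 2 / n ^ 2"
      unfolding power2_eq_square n_def
      using H_le[OF assms(1)] H_le[OF assms(2)]
      by (intro divide_right_mono mult_mono) (simp_all add: add_nonneg_nonneg H_nonneg)
    finally show "\<bar>\<bar>b k - b (Suc k)\<bar>\<bar> \<le> (2 + ln (real (Suc k))) ^ 2 / real (Suc k) ^ 2"
      by (simp add: n_def)
  qed
  ultimately have "summable (\<lambda>k. (-1) ^ k * b k)"
    by (rule summable_alternating_bounded_variation)
  then show ?thesis
    by (simp add: T_term_def b_def mult.assoc)
qed

lemma T_term_Suc_eq: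
  assumes "1 \<le> p1" "1 \<le> p2"
  shows "T_term p1 p2 (Suc j) k =
    S_term p1 p2 1 j (Suc k) + S_term p2 p1 1 j (Suc k) - S_term 0 (p1 + p2 + 1) 1 j (Suc k)
    - T_term p1 p2 j (Suc k)"
proof -
  define n where "n = Suc k"
  define d where "d = real (n + j)"
  define a1 where "a1 = 1 / real n ^ p1"
  define a2 where "a2 = 1 / real n ^ p2"
  have n: "real n \<noteq> 0"
    by (simp add: n_def)
  have H_k: "H p1 k = H p1 n - a1" "H p2 k = H p2 n - a2"
    using H_Suc[OF assms(1), of k] H_Suc[OF assms(2), of k] by (simp_all add: n_def a1_def a2_def)
  have "T_term p1 p2 (Suc j) k = (-1) ^ n * (H p1 n - a1) * (H p2 n - a2) / d"
    by (simp add: T_term_def H_k n_def d_def)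
  moreover have "T_term p1 p2 j n = (-1) ^ (n + 1) * H p1 n * H p2 n / d"
    by (simp add: T_term_def d_def)
  moreover have "S_term p1 p2 1 j n = (-1) ^ (n + 1) * H p1 n * a2 / d"
    using n by (simp add: S_term_def a2_def d_def)
  moreover have "S_term p2 p1 1 j n = (-1) ^ (n + 1) * H p2 n * a1 / d"
    using n by (simp add: S_term_def a1_def d_def)
  moreover have "S_term 0 (p1 + p2 + 1) 1 j n = (-1) ^ (n + 1) * a1 * a2 / d"
    using n by (simp add: S_term_def H_def a1_def a2_def d_def power_add)
  ultimately show ?thesis
    unfolding n_def[symmetric] by (simp add: diff_divide_distrib add_divide_distrib algebra_simps)
qed

lemma T_Suc_sums:
  assumes "1 \<le> p1" "1 \<le> p2" "summable (\<lambda>k. T_term p1 p2 j (Suc k))"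
  shows "(\<lambda>k. T_term p1 p2 (Suc j) (Suc k)) sums
    (S p1 p2 1 j + S p2 p1 1 j - S 0 (p1 + p2 + 1) 1 j - T p1 p2 j)"
proof -
  have "(\<lambda>k. T_term p1 p2 (Suc j) k) sums
      (S p1 p2 1 j + S p2 p1 1 j - S 0 (p1 + p2 + 1) 1 j - T p1 p2 j)"
    unfolding T_term_Suc_eq[OF assms(1,2)] S_eq_suminf T_eq_suminf
    using assms by (intro sums_diff sums_add summable_sums summable_S_term summable_S_term_0) simp_all
  moreover have "T_term p1 p2 (Suc j) 0 = 0"
    by (simp add: T_term_def)
  ultimately show ?thesis
    by (simp add: sums_Suc_iff)
qed

lemma summable_T_term:
  assumes "1 \<le> p1" "1 \<le> p2"
  shows "summable (\<lambda>k. T_term p1 p2 r (Suc k))"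
proof (induction r)
  case 0
  show ?case
    using summable_T_term_0[OF assms] .
next
  case (Suc r)
  show ?case
    using T_Suc_sums[OF assms Suc.IH] by (rule sums_summable)
qed

lemma T_Suc:
  assumes "1 \<le> p1" "1 \<le> p2"
  shows "T p1 p2 (Suc j) = S p1 p2 1 j + S p2 p1 1 j - S 0 (p1 + p2 + 1) 1 j - T p1 p2 j"
  using sums_unique[OF T_Suc_sums[OF assms summable_T_term[OF assms]]]
  by (simp add: T_eq_suminf)

lemma minus_one_power_diff_Suc:
  "j < r \<Longrightarrow> (-1 :: 'a :: ring_1) ^ (r - j) = - ((-1) ^ (r - Suc j))"
  by (simp flip: Suc_diff_Suc)

lemma alternating_recurrence_closed_form:
  fixes x c :: "nat \<Rightarrow> 'a :: comm_ring_1"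
  assumes "\<And>j. x (Suc j) = c j - x j"
  shows "x r = (-1) ^ r * x 0 + (\<Sum>j<r. (-1) ^ (r - 1 - j) * c j)"
proof (induction r)
  case (Suc r)
  have sign_flip: "(\<Sum>j<r. (-1) ^ (Suc r - 1 - j) * c j) = - (\<Sum>j<r. (-1) ^ (r - 1 - j) * c j)"
    unfolding sum_negf[symmetric] by (intro sum.cong refl) (simp add: minus_one_power_diff_Suc)
  have "x (Suc r) = c r - x r"
    by (rule assms)
  also have "\<dots> = c r - (-1) ^ r * x 0 - (\<Sum>j<r. (-1) ^ (r - 1 - j) * c j)"
    by (simp add: Suc.IH)
  also have "\<dots> = (-1) ^ Suc r * x 0 + (\<Sum>j<Suc r. (-1) ^ (Suc r - 1 - j) * c j)"
    using sign_flip by simp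
  finally show ?case .
qed simp

theorem lemma9:
  fixes p1 p2 r :: nat
  assumes "p1 \<ge> 1" and "p2 \<ge> 1" and "r \<ge> 1"
  shows "T p1 p2 r =
    (-1) ^ r * (Sppm p1 p2 1 - Spm p1 (p2 + 1) - Spm p2 (p1 + 1) + zetabar (p1 + p2 + 1))
    + (\<Sum>j\<in>{1..<r}. (-1) ^ (r - 1 - j) * (S p1 p2 1 j + S p2 p1 1 j))
    + (\<Sum>j\<in>{1..<r}. (-1) ^ (r - j) * S 0 (p1 + p2 + 1) 1 j)"
proof -
  define c where "c j = S p1 p2 1 j + S p2 p1 1 j - S 0 (p1 + p2 + 1) 1 j" for j
  have "T p1 p2 r = (-1) ^ r * T p1 p2 0 + (\<Sum>j<r. (-1) ^ (r - 1 - j) * c j)"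
    unfolding c_def by (rule alternating_recurrence_closed_form) (rule T_Suc[OF assms(1,2)])
  also have "(\<Sum>j<r. (-1) ^ (r - 1 - j) * c j)
      = (-1) ^ (r - 1) * c 0 + (\<Sum>j\<in>{1..<r}. (-1) ^ (r - 1 - j) * c j)"
    using assms(3) by (simp add: lessThan_atLeast0 sum.atLeast_Suc_lessThan)
  also have "(\<Sum>j\<in>{1..<r}. (-1) ^ (r - 1 - j) * c j)
      = (\<Sum>j\<in>{1..<r}. (-1) ^ (r - 1 - j) * (S p1 p2 1 j + S p2 p1 1 j))
        + (\<Sum>j\<in>{1..<r}. (-1) ^ (r - j) * S 0 (p1 + p2 + 1) 1 j)"
    unfolding sum.distrib[symmetric]
    by (intro sum.cong refl) (simp add: c_def algebra_simps minus_one_power_diff_Suc)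
  also have "c 0 = Spm p1 (p2 + 1) + Spm p2 (p1 + 1) - zetabar (p1 + p2 + 1)"
    unfolding c_def S_0_eq_zetabar by (simp only: S_0_eq_Spm)
  also have "(-1) ^ (r - 1) = - ((-1) ^ r :: real)"
    using assms(3) by (cases r) simp_all
  finally show ?thesis
    unfolding T_0_eq_Sppm by (simp add: algebra_simps)
qed

end
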